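(* Let $X$ be a finite $n$-dimensional simplicial complex and $0\le k\le n-1$. There exists a $k$-cone function (with some apex) if and only if $\widetilde H_j(X)=\widetilde H^j(X)=0$ for every $0\le j\le k$.
   Context: $X(-1)=\{\emptyset\}$. Over $\mathbb{F}_2$: $C_j(X)$ has basis $X(j)$, $\partial_j\sigma=\sum_{\tau\subset\sigma,|\tau|=|\sigma|-1}\tau$ (so $\partial_0\{u\}=\emptyset$); $\widetilde H_j(X)=\ker\partial_j/\operatorname{Im}\partial_{j+1}$, and $\widetilde H^j(X)$ is the corresponding (reduced) cohomology with $\mathbb{F}_2$ coefficients. Cone function: a $(-1)$-cone function with apex $v$ maps $\emptyset\mapsto\{v\}$; for $k\ge0$, a $k$-cone function with apex $v$ is a linear map $\operatorname{Cone}^v_k:\bigoplus_{j=-1}^kC_j\to\bigoplus_{j=-1}^kC_{j+1}$ (sending $C_j$ into $C_{j+1}$) whose restriction to $\bigoplus_{j=-1}^{k-1}C_j$ is a $(k-1)$-cone function with apex $v$, and with $\partial_{k+1}\operatorname{Cone}^v_k(A)=A+\operatorname{Cone}^v_k(\partial_kA)$ for all $A\in C_k$. *)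

theory Defs
  imports Main
begin

text \<open>Finite abstract simplicial complex: a finite family of (finite) vertex sets,
  closed under taking subsets, and containing the empty face (so that X(-1) = {empty}).\<close>
definition simplicial_complex :: "'a set set \<Rightarrow> bool" where
  "simplicial_complex X \<longleftrightarrow> {} \<in> X \<and> (\<forall>\<sigma>\<in>X. finite \<sigma> \<and> (\<forall>\<tau>. \<tau> \<subseteq> \<sigma> \<longrightarrow> \<tau> \<in> X))"

definition faces :: "'a set set \<Rightarrow> int \<Rightarrow> 'a set set" where
  "faces X j = {\<sigma> \<in> X. int (card \<sigma>) = j + 1}"

definition has_dim :: "'a set set \<Rightarrow> nat \<Rightarrow> bool" where
  "has_dim X n \<longleftrightarrow> (\<exists>\<sigma>\<in>X. card \<sigma> = n + 1) \<and> (\<forall>\<sigma>\<in>X. card \<sigma> \<le> n + 1)"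

text \<open>F_2-chains C_j(X): a chain is identified with its support, a subset of X(j);
  addition is symmetric difference.\<close>
definition chains :: "'a set set \<Rightarrow> int \<Rightarrow> 'a set set set" where
  "chains X j = Pow (faces X j)"

definition sym_diff :: "'b set \<Rightarrow> 'b set \<Rightarrow> 'b set" where
  "sym_diff A B = (A - B) \<union> (B - A)"

definition bd :: "'a set set \<Rightarrow> int \<Rightarrow> 'a set set \<Rightarrow> 'a set set" where
  "bd X j A = {\<tau> \<in> faces X (j - 1). odd (card {\<sigma> \<in> A. \<tau> \<subseteq> \<sigma>})}"

text \<open>F_2-cochains C^j(X) = functions X(j) \<rightarrow> F_2, identified with their supports;
  coboundary \<delta>^j : C^j \<rightarrow> C^(j+1).\<close>
definition cochains :: "'a set set \<Rightarrow> int \<Rightarrow> 'a set set set" where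
  "cochains X j = Pow (faces X j)"

definition cobd :: "'a set set \<Rightarrow> int \<Rightarrow> 'a set set \<Rightarrow> 'a set set" where
  "cobd X j B = {\<sigma> \<in> faces X (j + 1). odd (card {\<tau> \<in> B. \<tau> \<subseteq> \<sigma>})}"

definition homology_vanishes :: "'a set set \<Rightarrow> int \<Rightarrow> bool" where
  "homology_vanishes X j \<longleftrightarrow>
     {A \<in> chains X j. bd X j A = {}} \<subseteq> bd X (j + 1) ` chains X (j + 1)"

definition cohomology_vanishes :: "'a set set \<Rightarrow> int \<Rightarrow> bool" where
  "cohomology_vanishes X j \<longleftrightarrow>
     {B \<in> cochains X j. cobd X j B = {}} \<subseteq> cobd X (j - 1) ` cochains X (j - 1)"

text \<open>A k-cone function with apex v, given by its graded components
  c j : C_j \<rightarrow> C_(j+1) for j = -1..k (a linear map on the direct sum sending C_j into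
  C_(j+1) is exactly such a family of linear maps).\<close>
definition is_cone_function :: "'a set set \<Rightarrow> int \<Rightarrow> 'a \<Rightarrow> (int \<Rightarrow> 'a set set \<Rightarrow> 'a set set) \<Rightarrow> bool" where
  "is_cone_function X k v c \<longleftrightarrow>
     (\<forall>j. -1 \<le> j \<and> j \<le> k \<longrightarrow>
        (\<forall>A \<in> chains X j. c j A \<in> chains X (j + 1)) \<and>
        (\<forall>A \<in> chains X j. \<forall>B \<in> chains X j. c j (sym_diff A B) = sym_diff (c j A) (c j B))) \<and>
     c (-1) {{}} = {{v}} \<and>
     (\<forall>j. 0 \<le> j \<and> j \<le> k \<longrightarrow>
        (\<forall>A \<in> chains X j. bd X (j + 1) (c j A) = sym_diff A (c (j - 1) (bd X j A))))"

end

theory Submission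
  imports Defs
begin

text \<open>The identity \<open>\<partial>c + c\<partial> = id\<close> in degrees \<open>\<le> k\<close> makes every cycle \<open>A\<close> the boundary
  of \<open>c A\<close>; transposed with respect to the pairing of chains and cochains over \<open>F\<^sub>2\<close>
  it reads \<open>\<delta>c\<^sup>* + c\<^sup>*\<delta> = id\<close>, so every cocycle \<open>B\<close> is the coboundary of \<open>c\<^sup>* B\<close>.
  Conversely a cone function is built degree by degree from a vertex \<open>v\<close>: for an
  \<open>M\<close>-face \<open>\<sigma>\<close> the chain \<open>\<sigma> + c(\<partial>\<sigma>)\<close> is a cycle, since \<open>\<partial>c\<close> is the identity on
  boundaries, so vanishing of \<open>H\<^sub>M\<close> provides a chain it bounds, which is taken as the
  value of the next component on \<open>\<sigma>\<close>.\<close>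

lemma odd_card_sym_diff:
  assumes "finite A" "finite B"
  shows "odd (card (sym_diff A B)) \<longleftrightarrow> odd (card A) \<noteq> odd (card B)"
proof -
  have "card (sym_diff A B) = card (A - B) + card (B - A)"
    using assms by (simp add: sym_diff_def card_Un_disjoint Int_commute Diff_Int_distrib2)
  moreover have "card A = card (A \<inter> B) + card (A - B)" "card B = card (A \<inter> B) + card (B - A)"
    using assms card_Int_Diff[of A B] card_Int_Diff[of B A] by (simp_all add: Int_commute)
  ultimately show ?thesis by auto
qed

lemma finite_chain: "finite X \<Longrightarrow> A \<in> chains X j \<Longrightarrow> finite A"
  by (auto simp: chains_def faces_def intro: finite_subset)

lemma chains_induct [consumes 2, case_names empty add]:
  assumes "finite X" "A \<in> chains X j"
    and "P {}"
    and "\<And>\<sigma> A. \<sigma> \<in> faces X j \<Longrightarrow> A \<in> chains X j \<Longrightarrow> P A \<Longrightarrow> P (sym_diff {\<sigma>} A)"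
  shows "P A"
proof -
  have "finite A" "A \<subseteq> faces X j"
    using assms(1,2) finite_chain by (auto simp: chains_def)
  then show ?thesis
  proof (induction rule: finite_subset_induct')
    case empty
    show ?case by fact
  next
    case (insert \<sigma> A)
    then have "P (sym_diff {\<sigma>} A)" using assms(4) by (simp add: chains_def)
    moreover have "sym_diff {\<sigma>} A = insert \<sigma> A" using insert by (auto simp: sym_diff_def)
    ultimately show ?case by simp
  qed
qed

definition linear_chain_map :: "'a set set \<Rightarrow> int \<Rightarrow> int \<Rightarrow> ('a set set \<Rightarrow> 'a set set) \<Rightarrow> bool"
  where "linear_chain_map X i j g \<longleftrightarrow>
    (\<forall>A\<in>chains X i. g A \<in> chains X j) \<and>
    (\<forall>A\<in>chains X i. \<forall>B\<in>chains X i. g (sym_diff A B) = sym_diff (g A) (g B))"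

lemma linear_chain_map_empty: "linear_chain_map X i j g \<Longrightarrow> g {} = {}"
  unfolding linear_chain_map_def chains_def sym_diff_def by (metis Pow_bottom Diff_cancel sup.idem)

lemma linear_chain_map_id: "linear_chain_map X i i (\<lambda>A. A)"
  by (simp add: linear_chain_map_def)

lemma linear_chain_map_zero: "linear_chain_map X i j (\<lambda>A. {})"
  by (simp add: linear_chain_map_def chains_def sym_diff_def)

lemma linear_chain_map_comp:
  "linear_chain_map X i j g \<Longrightarrow> linear_chain_map X j k h \<Longrightarrow> linear_chain_map X i k (\<lambda>A. h (g A))"
  by (simp add: linear_chain_map_def)

lemma linear_chain_map_sym_diff:
  assumes "linear_chain_map X i j g" "linear_chain_map X i j h"
  shows "linear_chain_map X i j (\<lambda>A. sym_diff (g A) (h A))"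
  using assms unfolding linear_chain_map_def by (auto simp: chains_def sym_diff_def)

lemma linear_chain_map_eqI:
  assumes "finite X" "linear_chain_map X i j g" "linear_chain_map X i j h"
    and "\<And>\<sigma>. \<sigma> \<in> faces X i \<Longrightarrow> g {\<sigma>} = h {\<sigma>}"
    and "A \<in> chains X i"
  shows "g A = h A"
  using assms(1,5)
proof (induction rule: chains_induct)
  case empty
  show ?case using assms(2,3) by (simp add: linear_chain_map_empty)
next
  case (add \<sigma> A)
  have "{\<sigma>} \<in> chains X i" using add.hyps(1) by (simp add: chains_def)
  then show ?case
    using add assms(2-4) by (simp add: linear_chain_map_def)
qed

definition linear_ext :: "'b set \<Rightarrow> ('c \<Rightarrow> 'b set) \<Rightarrow> 'c set \<Rightarrow> 'b set"
  where "linear_ext U f A = {x \<in> U. odd (card {\<sigma> \<in> A. x \<in> f \<sigma>})}"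

lemma linear_ext_singleton: "linear_ext U f {\<sigma>} = U \<inter> f \<sigma>"
proof -
  have "{\<tau> \<in> {\<sigma>}. x \<in> f \<tau>} = (if x \<in> f \<sigma> then {\<sigma>} else {})" for x
    by auto
  then show ?thesis by (auto simp: linear_ext_def)
qed

lemma linear_ext_sym_diff:
  assumes "finite A" "finite B"
  shows "linear_ext U f (sym_diff A B) = sym_diff (linear_ext U f A) (linear_ext U f B)"
proof -
  have "{\<sigma> \<in> sym_diff A B. x \<in> f \<sigma>} = sym_diff {\<sigma> \<in> A. x \<in> f \<sigma>} {\<sigma> \<in> B. x \<in> f \<sigma>}" for x
    by (auto simp: sym_diff_def)
  then have "x \<in> linear_ext U f (sym_diff A B) \<longleftrightarrow>
      x \<in> U \<and> odd (card {\<sigma> \<in> A. x \<in> f \<sigma>}) \<noteq> odd (card {\<sigma> \<in> B. x \<in> f \<sigma>})" for x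
    using assms by (simp add: linear_ext_def odd_card_sym_diff)
  then show ?thesis by (auto simp: linear_ext_def sym_diff_def)
qed

lemma linear_chain_map_linear_ext:
  "finite X \<Longrightarrow> linear_chain_map X i j (linear_ext (faces X j) f)"
  unfolding linear_chain_map_def
proof (intro conjI ballI)
  fix A B
  show "linear_ext (faces X j) f A \<in> chains X j"
    by (auto simp: chains_def linear_ext_def)
  assume "finite X" "A \<in> chains X i" "B \<in> chains X i"
  then show "linear_ext (faces X j) f (sym_diff A B) =
      sym_diff (linear_ext (faces X j) f A) (linear_ext (faces X j) f B)"
    by (simp add: linear_ext_sym_diff finite_chain)
qed

lemma bd_eq_linear_ext: "bd X j = linear_ext (faces X (j - 1)) Pow"
  by (auto simp: bd_def linear_ext_def)

lemma linear_chain_map_bd: "finite X \<Longrightarrow> linear_chain_map X j (j - 1) (bd X j)"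
  by (simp add: bd_eq_linear_ext linear_chain_map_linear_ext)

lemma bd_singleton: "bd X j {\<sigma>} = {\<tau> \<in> faces X (j - 1). \<tau> \<subseteq> \<sigma>}"
  by (auto simp: bd_eq_linear_ext linear_ext_singleton)

lemma faces_minus_one: "simplicial_complex X \<Longrightarrow> faces X (-1) = {{}}"
  by (auto simp: faces_def simplicial_complex_def)

lemma card_covering_faces:
  assumes "simplicial_complex X" "\<sigma> \<in> X" "\<rho> \<subseteq> \<sigma>"
  shows "card {\<tau> \<in> X. \<rho> \<subseteq> \<tau> \<and> \<tau> \<subseteq> \<sigma> \<and> card \<tau> = Suc (card \<rho>)} = card (\<sigma> - \<rho>)"
proof -
  have "finite \<sigma>" using assms(1,2) by (simp add: simplicial_complex_def)
  then have "finite \<rho>" using assms(3) finite_subset by blast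
  have "{\<tau> \<in> X. \<rho> \<subseteq> \<tau> \<and> \<tau> \<subseteq> \<sigma> \<and> card \<tau> = Suc (card \<rho>)} = (\<lambda>x. insert x \<rho>) ` (\<sigma> - \<rho>)"
  proof (intro set_eqI iffI)
    fix \<tau> assume \<tau>: "\<tau> \<in> {\<tau> \<in> X. \<rho> \<subseteq> \<tau> \<and> \<tau> \<subseteq> \<sigma> \<and> card \<tau> = Suc (card \<rho>)}"
    then have "card (\<tau> - \<rho>) = 1" using \<open>finite \<rho>\<close> by (simp add: card_Diff_subset)
    then obtain x where x: "\<tau> - \<rho> = {x}" using card_1_singletonE by blast
    then show "\<tau> \<in> (\<lambda>x. insert x \<rho>) ` (\<sigma> - \<rho>)" using \<tau> by blast
  next
    fix \<tau> assume "\<tau> \<in> (\<lambda>x. insert x \<rho>) ` (\<sigma> - \<rho>)"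
    then obtain x where x: "x \<in> \<sigma> - \<rho>" "\<tau> = insert x \<rho>" by blast
    then have "\<tau> \<in> X" using assms unfolding simplicial_complex_def by blast
    then show "\<tau> \<in> {\<tau> \<in> X. \<rho> \<subseteq> \<tau> \<and> \<tau> \<subseteq> \<sigma> \<and> card \<tau> = Suc (card \<rho>)}"
      using x assms(3) \<open>finite \<rho>\<close> by auto
  qed
  moreover have "inj_on (\<lambda>x. insert x \<rho>) (\<sigma> - \<rho>)" by (auto simp: inj_on_def)
  ultimately show ?thesis by (simp add: card_image)
qed

lemma bd_bd_singleton:
  assumes "simplicial_complex X" "\<sigma> \<in> faces X j"
  shows "bd X (j - 1) (bd X j {\<sigma>}) = {}"
proof -
  have "even (card {\<tau> \<in> bd X j {\<sigma>}. \<rho> \<subseteq> \<tau>})" if \<rho>: "\<rho> \<in> faces X (j - 1 - 1)" for \<rho>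
  proof (cases "\<rho> \<subseteq> \<sigma>")
    case False
    then have "{\<tau> \<in> bd X j {\<sigma>}. \<rho> \<subseteq> \<tau>} = {}" by (auto simp: bd_singleton)
    then show ?thesis by (simp only: card.empty) simp
  next
    case True
    have "{\<tau> \<in> bd X j {\<sigma>}. \<rho> \<subseteq> \<tau>} = {\<tau> \<in> X. \<rho> \<subseteq> \<tau> \<and> \<tau> \<subseteq> \<sigma> \<and> card \<tau> = Suc (card \<rho>)}"
      using \<rho> by (auto simp: bd_singleton faces_def)
    moreover have "card (\<sigma> - \<rho>) = 2"
    proof -
      have "finite \<rho>" using \<rho> assms(1) by (simp add: faces_def simplicial_complex_def)
      moreover have "card \<sigma> = card \<rho> + 2" using \<rho> assms(2) by (simp add: faces_def)
      ultimately show ?thesis using True by (simp add: card_Diff_subset)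
    qed
    ultimately show ?thesis
      using card_covering_faces[OF assms(1) _ True] assms(2) by (simp add: faces_def)
  qed
  then show ?thesis by (auto simp: bd_def[of X "j - 1"])
qed

lemma bd_bd:
  assumes "simplicial_complex X" "finite X" "A \<in> chains X j"
  shows "bd X (j - 1) (bd X j A) = {}"
proof -
  have "linear_chain_map X j (j - 1 - 1) (\<lambda>A. bd X (j - 1) (bd X j A))"
    using linear_chain_map_bd[OF assms(2)] linear_chain_map_bd[OF assms(2)]
    by (rule linear_chain_map_comp)
  from linear_chain_map_eqI[OF assms(2) this linear_chain_map_zero _ assms(3)]
  show ?thesis using bd_bd_singleton[OF assms(1)] by simp
qed

text \<open>The \<open>F\<^sub>2\<close>-valued pairing of a chain and a cochain, with \<open>False\<close>, \<open>True\<close> and \<open>\<noteq>\<close>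
  playing the roles of \<open>0\<close>, \<open>1\<close> and addition.\<close>

definition pairing :: "'b set \<Rightarrow> 'b set \<Rightarrow> bool"
  where "pairing P B \<longleftrightarrow> odd (card (P \<inter> B))"

lemma pairing_singleton: "pairing {\<sigma>} B \<longleftrightarrow> \<sigma> \<in> B"
  by (cases "\<sigma> \<in> B") (simp_all add: pairing_def)

lemma pairing_empty_right: "\<not> pairing P {}"
  by (simp add: pairing_def)

lemma pairing_sym_diff:
  assumes "finite P" "finite Q"
  shows "pairing (sym_diff P Q) B \<longleftrightarrow> pairing P B \<noteq> pairing Q B"
proof -
  have "sym_diff P Q \<inter> B = sym_diff (P \<inter> B) (Q \<inter> B)" by (auto simp: sym_diff_def)
  then show ?thesis using assms by (simp add: pairing_def odd_card_sym_diff)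
qed

lemma pairing_bd_cobd:
  assumes "finite X" "C \<in> chains X j" "B \<in> cochains X (j - 1)"
  shows "pairing (bd X j C) B \<longleftrightarrow> pairing C (cobd X (j - 1) B)"
  using assms(1,2)
proof (induction rule: chains_induct)
  case empty
  show ?case using linear_chain_map_empty[OF linear_chain_map_bd[OF assms(1)]]
    by (simp add: pairing_def)
next
  case (add \<sigma> C)
  have "{\<sigma>} \<in> chains X j" using add.hyps(1) by (simp add: chains_def)
  then have bd_add: "bd X j (sym_diff {\<sigma>} C) = sym_diff (bd X j {\<sigma>}) (bd X j C)"
    and "finite (bd X j {\<sigma>})" "finite (bd X j C)"
    using add.hyps(2) linear_chain_map_bd[OF assms(1), of j] assms(1)
    by (auto simp: linear_chain_map_def intro: finite_chain)
  have "bd X j {\<sigma>} \<inter> B = {\<tau> \<in> B. \<tau> \<subseteq> \<sigma>}"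
    using assms(3) by (auto simp: bd_singleton cochains_def)
  then have "pairing (bd X j {\<sigma>}) B \<longleftrightarrow> pairing {\<sigma>} (cobd X (j - 1) B)"
    using add.hyps(1) by (simp add: pairing_singleton cobd_def) (simp add: pairing_def)
  then show ?case
    using add.IH bd_add \<open>finite (bd X j {\<sigma>})\<close> \<open>finite (bd X j C)\<close> add.hyps(2) assms(1)
    by (simp add: pairing_sym_diff finite_chain)
qed

definition dual_map :: "'a set set \<Rightarrow> int \<Rightarrow> ('a set set \<Rightarrow> 'a set set) \<Rightarrow> 'a set set \<Rightarrow> 'a set set"
  where "dual_map X i g B = {\<tau> \<in> faces X i. pairing (g {\<tau>}) B}"

lemma pairing_dual_map:
  assumes "finite X" "linear_chain_map X i j g" "A \<in> chains X i"
  shows "pairing A (dual_map X i g B) \<longleftrightarrow> pairing (g A) B"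
  using assms(1,3)
proof (induction rule: chains_induct)
  case empty
  show ?case using linear_chain_map_empty[OF assms(2)] by (simp add: pairing_def)
next
  case (add \<tau> A)
  have "{\<tau>} \<in> chains X i" using add.hyps(1) by (simp add: chains_def)
  then have g_add: "g (sym_diff {\<tau>} A) = sym_diff (g {\<tau>}) (g A)"
    and "finite (g {\<tau>})" "finite (g A)"
    using add.hyps(2) assms(1,2) by (auto simp: linear_chain_map_def intro: finite_chain)
  have "pairing {\<tau>} (dual_map X i g B) \<longleftrightarrow> pairing (g {\<tau>}) B"
    using add.hyps(1) by (simp add: pairing_singleton dual_map_def)
  then show ?case
    using add.IH g_add \<open>finite (g {\<tau>})\<close> \<open>finite (g A)\<close> add.hyps(2) assms(1)
    by (simp add: pairing_sym_diff finite_chain)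
qed

lemma is_cone_function_iff:
  "is_cone_function X k v c \<longleftrightarrow>
    (\<forall>j. -1 \<le> j \<and> j \<le> k \<longrightarrow> linear_chain_map X j (j + 1) (c j)) \<and>
    c (-1) {{}} = {{v}} \<and>
    (\<forall>j. 0 \<le> j \<and> j \<le> k \<longrightarrow>
       (\<forall>A \<in> chains X j. bd X (j + 1) (c j A) = sym_diff A (c (j - 1) (bd X j A))))"
  unfolding is_cone_function_def linear_chain_map_def by blast

lemma cone_function_linear:
  "is_cone_function X k v c \<Longrightarrow> -1 \<le> j \<Longrightarrow> j \<le> k \<Longrightarrow> linear_chain_map X j (j + 1) (c j)"
  by (simp add: is_cone_function_iff)

lemma cone_function_bd:
  "is_cone_function X k v c \<Longrightarrow> 0 \<le> j \<Longrightarrow> j \<le> k \<Longrightarrow> A \<in> chains X j \<Longrightarrow>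
    bd X (j + 1) (c j A) = sym_diff A (c (j - 1) (bd X j A))"
  by (simp add: is_cone_function_iff)

lemma cone_function_homology_vanishes:
  assumes "is_cone_function X k v c" "0 \<le> j" "j \<le> k"
  shows "homology_vanishes X j"
  unfolding homology_vanishes_def
proof clarify
  fix A assume A: "A \<in> chains X j" "bd X j A = {}"
  have "c (j - 1) {} = {}"
    using linear_chain_map_empty[OF cone_function_linear[OF assms(1), of "j - 1"]] assms(2,3)
    by simp
  then have "bd X (j + 1) (c j A) = A"
    using cone_function_bd[OF assms A(1)] A(2) by (simp add: sym_diff_def)
  moreover have "c j A \<in> chains X (j + 1)"
    using cone_function_linear[OF assms(1)] assms(2,3) A(1) by (simp add: linear_chain_map_def)
  ultimately show "A \<in> bd X (j + 1) ` chains X (j + 1)" by (metis image_eqI)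
qed

lemma cone_function_cohomology_vanishes:
  assumes "finite X" "is_cone_function X k v c" "0 \<le> j" "j \<le> k"
  shows "cohomology_vanishes X j"
  unfolding cohomology_vanishes_def
proof clarify
  fix B assume B: "B \<in> cochains X j" "cobd X j B = {}"
  define B' where "B' = dual_map X (j - 1) (c (j - 1)) B"
  have c_linear: "linear_chain_map X (j - 1) j (c (j - 1))"
    using cone_function_linear[OF assms(2), of "j - 1"] assms(3,4) by simp
  have "\<sigma> \<in> cobd X (j - 1) B' \<longleftrightarrow> \<sigma> \<in> B" if \<sigma>: "\<sigma> \<in> faces X j" for \<sigma>
  proof -
    have \<sigma>_chain: "{\<sigma>} \<in> chains X j" using \<sigma> by (simp add: chains_def)
    have bd_\<sigma>: "bd X j {\<sigma>} \<in> chains X (j - 1)"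
      using linear_chain_map_bd[OF assms(1)] \<sigma>_chain by (simp add: linear_chain_map_def)
    have c\<sigma>: "c j {\<sigma>} \<in> chains X (j + 1)"
      using cone_function_linear[OF assms(2)] assms(3,4) \<sigma>_chain by (simp add: linear_chain_map_def)
    then have bd_c\<sigma>: "bd X (j + 1) (c j {\<sigma>}) \<in> chains X j"
      using linear_chain_map_bd[OF assms(1), of "j + 1"] by (simp add: linear_chain_map_def)
    have "\<sigma> \<in> cobd X (j - 1) B' \<longleftrightarrow> pairing (bd X j {\<sigma>}) B'"
      using pairing_bd_cobd[OF assms(1) \<sigma>_chain]
      by (simp add: B'_def dual_map_def cochains_def pairing_singleton)
    also have "\<dots> \<longleftrightarrow> pairing (c (j - 1) (bd X j {\<sigma>})) B"
      unfolding B'_def using assms(1) c_linear bd_\<sigma> by (rule pairing_dual_map)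
    also have "c (j - 1) (bd X j {\<sigma>}) = sym_diff {\<sigma>} (bd X (j + 1) (c j {\<sigma>}))"
      using cone_function_bd[OF assms(2-4) \<sigma>_chain] by (auto simp: sym_diff_def)
    also have "pairing \<dots> B \<longleftrightarrow> (\<sigma> \<in> B) \<noteq> pairing (c j {\<sigma>}) (cobd X j B)"
      using pairing_bd_cobd[OF assms(1) c\<sigma>, of B] B(1) bd_c\<sigma> assms(1)
      by (simp add: pairing_sym_diff pairing_singleton finite_chain)
    finally show ?thesis using B(2) by (simp add: pairing_empty_right)
  qed
  moreover have "cobd X (j - 1) B' \<subseteq> faces X j" "B \<subseteq> faces X j"
    using B(1) by (auto simp: cobd_def cochains_def)
  ultimately have "B = cobd X (j - 1) B'" by blast
  moreover have "B' \<in> cochains X (j - 1)" by (auto simp: B'_def dual_map_def cochains_def)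
  ultimately show "B \<in> cobd X (j - 1) ` cochains X (j - 1)" by blast
qed

lemma cone_function_minus_one:
  assumes "simplicial_complex X" "finite X" "{v} \<in> X"
  shows "is_cone_function X (-1) v (\<lambda>_. linear_ext (faces X 0) (\<lambda>_. {{v}}))"
proof -
  have "{} \<in> faces X (-1)" "{v} \<in> faces X 0"
    using assms(1,3) by (auto simp: faces_def simplicial_complex_def)
  then show ?thesis
    using linear_chain_map_linear_ext[OF assms(2)]
    by (auto simp: is_cone_function_iff linear_ext_singleton)
qed

lemma bd_cone_function_bd:
  assumes "simplicial_complex X" "finite X" "is_cone_function X (M - 1) v c" "0 \<le> M"
    and "A \<in> chains X M"
  shows "bd X M (c (M - 1) (bd X M A)) = bd X M A"
proof (cases "M = 0")
  case True
  have "bd X 0 (c (-1) D) = D" if "D \<in> chains X (-1)" for D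
  proof (rule linear_chain_map_eqI[OF assms(2) _ linear_chain_map_id _ that])
    show "linear_chain_map X (-1) (-1) (\<lambda>D. bd X 0 (c (-1) D))"
      using cone_function_linear[OF assms(3), of "-1"] linear_chain_map_bd[OF assms(2), of 0] True
      by (simp add: linear_chain_map_comp)
    fix \<sigma> assume "\<sigma> \<in> faces X (-1)"
    then show "bd X 0 (c (-1) {\<sigma>}) = {\<sigma>}"
      using assms(3) by (auto simp: faces_minus_one[OF assms(1)] is_cone_function_iff bd_singleton)
  qed
  moreover have "bd X M A \<in> chains X (-1)"
    using linear_chain_map_bd[OF assms(2), of 0] assms(5) True by (simp add: linear_chain_map_def)
  ultimately show ?thesis using True by simp
next
  case False
  define D where "D = bd X M A"
  have "D \<in> chains X (M - 1)"
    using linear_chain_map_bd[OF assms(2)] assms(5) by (simp add: linear_chain_map_def D_def)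
  then have "bd X M (c (M - 1) D) = sym_diff D (c (M - 1 - 1) (bd X (M - 1) D))"
    using cone_function_bd[OF assms(3), of "M - 1" D] False assms(4) by simp
  moreover have "bd X (M - 1) D = {}" using bd_bd[OF assms(1,2,5)] by (simp add: D_def)
  moreover have "c (M - 1 - 1) {} = {}"
    using linear_chain_map_empty[OF cone_function_linear[OF assms(3), of "M - 1 - 1"]] False assms(4)
    by simp
  ultimately show ?thesis by (simp add: D_def sym_diff_def)
qed

lemma is_cone_function_fun_upd:
  assumes "is_cone_function X (M - 1) v c" "0 \<le> M" "linear_chain_map X M (M + 1) h"
    and "\<And>A. A \<in> chains X M \<Longrightarrow> bd X (M + 1) (h A) = sym_diff A (c (M - 1) (bd X M A))"
  shows "is_cone_function X M v (c(M := h))"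
  using assms unfolding is_cone_function_iff by (auto simp: not_le)

lemma cone_function_extend:
  assumes "simplicial_complex X" "finite X" "is_cone_function X (M - 1) v c" "0 \<le> M"
    and "homology_vanishes X M"
  shows "\<exists>h. is_cone_function X M v (c(M := h))"
proof -
  define g where "g A = sym_diff A (c (M - 1) (bd X M A))" for A
  have c_linear: "linear_chain_map X (M - 1) M (c (M - 1))"
    using cone_function_linear[OF assms(3), of "M - 1"] assms(4) by simp
  have g_linear: "linear_chain_map X M M g"
    unfolding g_def
    by (intro linear_chain_map_sym_diff linear_chain_map_id
        linear_chain_map_comp[OF linear_chain_map_bd[OF assms(2)] c_linear])
  have "\<exists>F \<in> chains X (M + 1). bd X (M + 1) F = g {\<sigma>}" if \<sigma>: "\<sigma> \<in> faces X M" for \<sigma>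
  proof -
    have \<sigma>_chain: "{\<sigma>} \<in> chains X M" using \<sigma> by (simp add: chains_def)
    then have "c (M - 1) (bd X M {\<sigma>}) \<in> chains X M"
      using linear_chain_map_bd[OF assms(2), of M] c_linear by (simp add: linear_chain_map_def)
    then have "bd X M (g {\<sigma>}) = sym_diff (bd X M {\<sigma>}) (bd X M (c (M - 1) (bd X M {\<sigma>})))"
      using linear_chain_map_bd[OF assms(2), of M] \<sigma>_chain by (simp add: g_def linear_chain_map_def)
    also have "\<dots> = {}"
      using bd_cone_function_bd[OF assms(1-4) \<sigma>_chain] by (simp add: sym_diff_def)
    finally have "bd X M (g {\<sigma>}) = {}" .
    moreover have "g {\<sigma>} \<in> chains X M" using g_linear \<sigma>_chain by (simp add: linear_chain_map_def)
    ultimately show ?thesis using assms(5) unfolding homology_vanishes_def by blast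
  qed
  then obtain f where f: "\<And>\<sigma>. \<sigma> \<in> faces X M \<Longrightarrow> f \<sigma> \<in> chains X (M + 1) \<and> bd X (M + 1) (f \<sigma>) = g {\<sigma>}"
    by metis
  define h where "h = linear_ext (faces X (M + 1)) f"
  have h_linear: "linear_chain_map X M (M + 1) h"
    unfolding h_def using assms(2) by (rule linear_chain_map_linear_ext)
  have "bd X (M + 1) (h A) = g A" if "A \<in> chains X M" for A
  proof (rule linear_chain_map_eqI[OF assms(2) _ g_linear _ that])
    show "linear_chain_map X M M (\<lambda>A. bd X (M + 1) (h A))"
      using linear_chain_map_comp[OF h_linear linear_chain_map_bd[OF assms(2)]] by simp
    fix \<sigma> assume "\<sigma> \<in> faces X M"
    moreover from this have "h {\<sigma>} = f \<sigma>"
      using f by (auto simp: h_def linear_ext_singleton chains_def)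
    ultimately show "bd X (M + 1) (h {\<sigma>}) = g {\<sigma>}" using f by simp
  qed
  then show ?thesis
    using is_cone_function_fun_upd[OF assms(3,4) h_linear] by (auto simp: g_def)
qed

lemma cone_function_exists:
  assumes "simplicial_complex X" "finite X" "{v} \<in> X"
    and "\<And>j. 0 \<le> j \<Longrightarrow> j < int m \<Longrightarrow> homology_vanishes X j"
  shows "\<exists>c. is_cone_function X (int m - 1) v c"
  using assms(4)
proof (induction m)
  case 0
  show ?case using cone_function_minus_one[OF assms(1-3)] by auto
next
  case (Suc m)
  then obtain c where "is_cone_function X (int m - 1) v c" by auto
  moreover have "homology_vanishes X (int m)" using Suc.prems by simp
  ultimately obtain h where "is_cone_function X (int m) v (c(int m := h))"
    using cone_function_extend[OF assms(1,2), of "int m" v c] by auto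
  then show ?case by auto
qed

theorem propositionA1:
  fixes X :: "'a set set" and n k :: nat
  assumes "simplicial_complex X" and "finite X" and "has_dim X n" and "k + 1 \<le> n"
  shows "(\<exists>v c. is_cone_function X (int k) v c) \<longleftrightarrow>
         (\<forall>j::int. 0 \<le> j \<and> j \<le> int k \<longrightarrow> homology_vanishes X j \<and> cohomology_vanishes X j)"
proof
  assume "\<exists>v c. is_cone_function X (int k) v c"
  then obtain v c where cone: "is_cone_function X (int k) v c" by blast
  show "\<forall>j::int. 0 \<le> j \<and> j \<le> int k \<longrightarrow> homology_vanishes X j \<and> cohomology_vanishes X j"
    using cone_function_homology_vanishes[OF cone] cone_function_cohomology_vanishes[OF assms(2) cone]
    by blast
next
  assume vanishing: "\<forall>j::int. 0 \<le> j \<and> j \<le> int k \<longrightarrow> homology_vanishes X j \<and> cohomology_vanishes X j"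
  txt \<open>Any vertex serves as apex.\<close>
  obtain \<sigma> where "\<sigma> \<in> X" "card \<sigma> = n + 1" using assms(3) by (auto simp: has_dim_def)
  then obtain v where "v \<in> \<sigma>" by fastforce
  then have "{v} \<in> X" using \<open>\<sigma> \<in> X\<close> assms(1) by (auto simp: simplicial_complex_def)
  then have "\<exists>c. is_cone_function X (int (k + 1) - 1) v c"
    using vanishing by (intro cone_function_exists[OF assms(1,2)]) auto
  then show "\<exists>v c. is_cone_function X (int k) v c" by auto
qed

end
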